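(* Let $\succ$ be a binary relation on $\mathcal{F}$ satisfying Axioms A1–A7 below, and define $\succsim$ on $X$ by $x\succsim y$ iff $y\not\succ x$. Let $f,g\in\mathcal{F}$ with $f(s)\succsim g(s)$ for all $s\in S$, and let $x\in X$. If $x\Join f$, then $g\not\succ x$; and if $x\Join g$, then $x\not\succ f$. Axioms: (A1) $\succ$ is asymmetric and transitive, and its restriction to $X$ is non-trivial and negatively transitive. (A2) For all $f,g,h\in\mathcal{F}$, $\{\alpha\in[0,1]:\alpha f+(1-\alpha)g\succ h\}$ and $\{\alpha\in[0,1]:h\succ\alpha f+(1-\alpha)g\}$ are open in $[0,1]$. (A3) For all $f,g\in\mathcal{F}$, $x\in X$, $\alpha\in(0,1)$: $f\succ g$ iff $\alpha f+(1-\alpha)x\succ\alpha g+(1-\alpha)x$. (A4) For all $x\in X$, $\{f:f\succ x\}$ and $\{f:x\succ f\}$ are convex. (A5) If $f(s)\succ g(s)$ for all $s\in S$ then $f\succ g$. (A6) If for all $x\in X$, $f\Join x$ implies $g\Join x$, then $f\Join g$. (A7) If $f\Join x$, $x\succ g$, $g\Join y$, $f\succ y$ (with $x,y\in X$), then $f\succ g$.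
   Context: $S$ is a set of states with algebra $\Sigma$; $X$ is a non-singleton convex subset of a real vector space; $\mathcal{F}$ is the set of simple acts $f:S\to X$ ($\Sigma$-measurable, finitely many values) with pointwise mixtures; elements of $X$ are identified with constant acts. $f\Join g$ means $f\not\succ g$ and $g\not\succ f$. *)

theory Defs
  imports "HOL-Analysis.Analysis"
begin

text \<open>States are the elements of the type 's (S = UNIV); Sigma is an algebra on S.
  Outcomes lie in a convex set X of a real vector space 'x.\<close>

definition acts :: "'s set set \<Rightarrow> 'x set \<Rightarrow> ('s \<Rightarrow> 'x) set" where
  "acts Sig X = {f. (\<forall>s. f s \<in> X) \<and> finite (range f) \<and> (\<forall>x. f -` {x} \<in> Sig)}"

definition cst :: "'x \<Rightarrow> 's \<Rightarrow> 'x" where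
  "cst x = (\<lambda>_. x)"

definition mix :: "real \<Rightarrow> ('s \<Rightarrow> 'x::real_vector) \<Rightarrow> ('s \<Rightarrow> 'x) \<Rightarrow> 's \<Rightarrow> 'x" where
  "mix a f g = (\<lambda>s. a *\<^sub>R f s + (1 - a) *\<^sub>R g s)"

definition incomp :: "('a \<Rightarrow> 'a \<Rightarrow> bool) \<Rightarrow> 'a \<Rightarrow> 'a \<Rightarrow> bool" where
  "incomp P f g \<longleftrightarrow> \<not> P f g \<and> \<not> P g f"

definition A1 :: "'s set set \<Rightarrow> 'x set \<Rightarrow> (('s \<Rightarrow> 'x) \<Rightarrow> ('s \<Rightarrow> 'x) \<Rightarrow> bool) \<Rightarrow> bool" where
  "A1 Sig X P \<longleftrightarrow>
     (\<forall>f\<in>acts Sig X. \<forall>g\<in>acts Sig X. P f g \<longrightarrow> \<not> P g f) \<and>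
     (\<forall>f\<in>acts Sig X. \<forall>g\<in>acts Sig X. \<forall>h\<in>acts Sig X. P f g \<longrightarrow> P g h \<longrightarrow> P f h) \<and>
     (\<exists>x\<in>X. \<exists>y\<in>X. P (cst x) (cst y)) \<and>
     (\<forall>x\<in>X. \<forall>y\<in>X. \<forall>z\<in>X. P (cst x) (cst y) \<longrightarrow> P (cst x) (cst z) \<or> P (cst z) (cst y))"

definition A2 :: "'s set set \<Rightarrow> 'x::real_vector set \<Rightarrow> (('s \<Rightarrow> 'x) \<Rightarrow> ('s \<Rightarrow> 'x) \<Rightarrow> bool) \<Rightarrow> bool" where
  "A2 Sig X P \<longleftrightarrow>
     (\<forall>f\<in>acts Sig X. \<forall>g\<in>acts Sig X. \<forall>h\<in>acts Sig X.
        openin (top_of_set {0..1}) {a\<in>{0..1::real}. P (mix a f g) h} \<and>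
        openin (top_of_set {0..1}) {a\<in>{0..1::real}. P h (mix a f g)})"

definition A3 :: "'s set set \<Rightarrow> 'x::real_vector set \<Rightarrow> (('s \<Rightarrow> 'x) \<Rightarrow> ('s \<Rightarrow> 'x) \<Rightarrow> bool) \<Rightarrow> bool" where
  "A3 Sig X P \<longleftrightarrow>
     (\<forall>f\<in>acts Sig X. \<forall>g\<in>acts Sig X. \<forall>x\<in>X. \<forall>a\<in>{0<..<1::real}.
        P f g \<longleftrightarrow> P (mix a f (cst x)) (mix a g (cst x)))"

definition A4 :: "'s set set \<Rightarrow> 'x::real_vector set \<Rightarrow> (('s \<Rightarrow> 'x) \<Rightarrow> ('s \<Rightarrow> 'x) \<Rightarrow> bool) \<Rightarrow> bool" where
  "A4 Sig X P \<longleftrightarrow>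
     (\<forall>x\<in>X. \<forall>f\<in>acts Sig X. \<forall>g\<in>acts Sig X. \<forall>a\<in>{0..1::real}.
        (P f (cst x) \<longrightarrow> P g (cst x) \<longrightarrow> P (mix a f g) (cst x)) \<and>
        (P (cst x) f \<longrightarrow> P (cst x) g \<longrightarrow> P (cst x) (mix a f g)))"

definition A5 :: "'s set set \<Rightarrow> 'x set \<Rightarrow> (('s \<Rightarrow> 'x) \<Rightarrow> ('s \<Rightarrow> 'x) \<Rightarrow> bool) \<Rightarrow> bool" where
  "A5 Sig X P \<longleftrightarrow>
     (\<forall>f\<in>acts Sig X. \<forall>g\<in>acts Sig X. (\<forall>s. P (cst (f s)) (cst (g s))) \<longrightarrow> P f g)"

definition A6 :: "'s set set \<Rightarrow> 'x set \<Rightarrow> (('s \<Rightarrow> 'x) \<Rightarrow> ('s \<Rightarrow> 'x) \<Rightarrow> bool) \<Rightarrow> bool" where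
  "A6 Sig X P \<longleftrightarrow>
     (\<forall>f\<in>acts Sig X. \<forall>g\<in>acts Sig X.
        (\<forall>x\<in>X. incomp P f (cst x) \<longrightarrow> incomp P g (cst x)) \<longrightarrow> incomp P f g)"

definition A7 :: "'s set set \<Rightarrow> 'x set \<Rightarrow> (('s \<Rightarrow> 'x) \<Rightarrow> ('s \<Rightarrow> 'x) \<Rightarrow> bool) \<Rightarrow> bool" where
  "A7 Sig X P \<longleftrightarrow>
     (\<forall>f\<in>acts Sig X. \<forall>g\<in>acts Sig X. \<forall>x\<in>X. \<forall>y\<in>X.
        incomp P f (cst x) \<longrightarrow> P (cst x) g \<longrightarrow> incomp P g (cst y) \<longrightarrow> P f (cst y) \<longrightarrow> P f g)"

definition weakpref :: "(('s \<Rightarrow> 'x) \<Rightarrow> ('s \<Rightarrow> 'x) \<Rightarrow> bool) \<Rightarrow> 'x \<Rightarrow> 'x \<Rightarrow> bool" where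
  "weakpref P x y \<longleftrightarrow> \<not> P (cst y) (cst x)"

end

theory Submission
  imports Defs
begin

text \<open>Suppose x is incomparable to f but g \<succ> x. If some outcome w lies strictly below x,
  A2 gives a < 1 with a g + (1 - a) w \<succ> x, while A3 and negative transitivity give
  a f(s) + (1 - a) x \<succ> a g(s) + (1 - a) w in every state; by A5 and transitivity
  a f + (1 - a) x \<succ> x, hence f \<succ> x by A3, a contradiction. If x is minimal, A1 provides
  some y \<succ> x, and A2 yields a mixture c of y and x with g \<succ> c \<succ> x, to which the first
  case applies. The second claim is the first one for the converse relation with f and g
  exchanged.\<close>

lemma mix_cst: "mix a (cst u) (cst v) = cst (a *\<^sub>R u + (1 - a) *\<^sub>R v)"
  by (simp add: mix_def cst_def)

lemma mix_same: "mix a f f = f"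
  by (simp add: mix_def algebra_simps)

lemma mix_one: "mix 1 f g = f"
  by (simp add: mix_def)

lemma mix_zero: "mix 0 f g = g"
  by (simp add: mix_def)

lemma cst_in_acts:
  assumes "algebra UNIV Sig" "c \<in> X"
  shows "cst c \<in> acts Sig X"
proof -
  interpret algebra UNIV Sig by fact
  have "cst c -` {y} \<in> {UNIV, {}}" for y
    by (auto simp: cst_def)
  moreover have "range (cst c) = {c}"
    by (auto simp: cst_def)
  ultimately show ?thesis
    using assms(2) by (auto simp: acts_def cst_def)
qed

lemma comp_in_acts:
  assumes "algebra UNIV Sig" "f \<in> acts Sig X" "h ` X \<subseteq> X"
  shows "h \<circ> f \<in> acts Sig X"
proof -
  interpret algebra UNIV Sig by fact
  have f: "\<forall>s. f s \<in> X" "finite (range f)" "\<forall>u. f -` {u} \<in> Sig"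
    using assms(2) by (auto simp: acts_def)
  have "(h \<circ> f) -` {y} = (\<Union>u \<in> range f \<inter> h -` {y}. f -` {u})" for y
    by auto
  then have "(h \<circ> f) -` {y} \<in> Sig" for y
    using f(2,3) by auto
  moreover have "range (h \<circ> f) = h ` range f"
    by auto
  ultimately show ?thesis
    using f(1,2) assms(3) by (auto simp: acts_def)
qed

lemma openin_unit_interval_meets_interior:
  assumes "openin (top_of_set {0..1}) U" "t \<in> U"
  shows "\<exists>a\<in>U. 0 < a \<and> a < (1::real)"
proof -
  obtain T where T: "open T" "U = {0..1} \<inter> T"
    using assms(1) openin_open by blast
  then have "T \<inter> closure {0<..<1::real} \<noteq> {}"
    using assms(2) by auto
  then have "T \<inter> {0<..<1} \<noteq> {}"
    using open_Int_closure_eq_empty[OF T(1)] by blast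
  then show ?thesis
    using T(2) by auto
qed

lemma A1_conversep: "A1 Sig X P \<Longrightarrow> A1 Sig X P\<inverse>\<inverse>"
  unfolding A1_def conversep_iff by (elim conjE, intro conjI; blast)

lemma A2_conversep: "A2 Sig X P \<Longrightarrow> A2 Sig X P\<inverse>\<inverse>"
  unfolding A2_def by simp

lemma A3_conversep: "A3 Sig X P \<Longrightarrow> A3 Sig X P\<inverse>\<inverse>"
  unfolding A3_def by simp

lemma A5_conversep: "A5 Sig X P \<Longrightarrow> A5 Sig X P\<inverse>\<inverse>"
  unfolding A5_def by simp

locale mixture_preference =
  fixes Sig :: "'s set set" and X :: "'x::real_vector set"
    and P :: "('s \<Rightarrow> 'x) \<Rightarrow> ('s \<Rightarrow> 'x) \<Rightarrow> bool"
  assumes Sig_algebra: "algebra UNIV Sig" and X_convex: "convex X"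
    and A1: "A1 Sig X P" and A2: "A2 Sig X P" and A3: "A3 Sig X P" and A5: "A5 Sig X P"
begin

lemma converse_mixture_preference: "mixture_preference Sig X P\<inverse>\<inverse>"
  using Sig_algebra X_convex A1_conversep[OF A1] A2_conversep[OF A2] A3_conversep[OF A3]
    A5_conversep[OF A5]
  by (simp add: mixture_preference_def)

lemma mix_in_X:
  "u \<in> X \<Longrightarrow> v \<in> X \<Longrightarrow> 0 \<le> a \<Longrightarrow> a \<le> 1 \<Longrightarrow> a *\<^sub>R u + (1 - a) *\<^sub>R v \<in> X"
  using convexD[OF X_convex] by simp

lemma cst_acts: "c \<in> X \<Longrightarrow> cst c \<in> acts Sig X"
  using cst_in_acts[OF Sig_algebra] .

lemma mix_cst_acts:
  assumes "f \<in> acts Sig X" "c \<in> X" "0 \<le> a" "a \<le> 1"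
  shows "mix a f (cst c) \<in> acts Sig X"
proof -
  have "mix a f (cst c) = (\<lambda>u. a *\<^sub>R u + (1 - a) *\<^sub>R c) \<circ> f"
    by (auto simp: mix_def cst_def)
  moreover have "(\<lambda>u. a *\<^sub>R u + (1 - a) *\<^sub>R c) ` X \<subseteq> X"
    using mix_in_X assms(2-4) by auto
  ultimately show ?thesis
    using comp_in_acts[OF Sig_algebra assms(1)] by simp
qed

lemma strict_trans:
  "f \<in> acts Sig X \<Longrightarrow> g \<in> acts Sig X \<Longrightarrow> h \<in> acts Sig X \<Longrightarrow> P f g \<Longrightarrow> P g h \<Longrightarrow> P f h"
  using A1 unfolding A1_def by blast

lemma cst_negative_trans:
  "x \<in> X \<Longrightarrow> y \<in> X \<Longrightarrow> z \<in> X \<Longrightarrow> P (cst x) (cst y) \<Longrightarrow>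
    P (cst x) (cst z) \<or> P (cst z) (cst y)"
  using A1 unfolding A1_def by blast

lemma cst_above_or_below:
  assumes "x \<in> X"
  shows "(\<exists>w\<in>X. P (cst x) (cst w)) \<or> (\<exists>y\<in>X. P (cst y) (cst x))"
proof -
  obtain y z where "y \<in> X" "z \<in> X" "P (cst y) (cst z)"
    using A1 unfolding A1_def by blast
  then show ?thesis
    using cst_negative_trans assms by blast
qed

lemma openin_mix_above:
  "f \<in> acts Sig X \<Longrightarrow> g \<in> acts Sig X \<Longrightarrow> h \<in> acts Sig X \<Longrightarrow>
    openin (top_of_set {0..1}) {a\<in>{0..1}. P (mix a f g) h}"
  using A2 unfolding A2_def by blast

lemma openin_mix_below:
  "f \<in> acts Sig X \<Longrightarrow> g \<in> acts Sig X \<Longrightarrow> h \<in> acts Sig X \<Longrightarrow>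
    openin (top_of_set {0..1}) {a\<in>{0..1}. P h (mix a f g)}"
  using A2 unfolding A2_def by blast

lemma mix_cst_iff:
  "f \<in> acts Sig X \<Longrightarrow> g \<in> acts Sig X \<Longrightarrow> c \<in> X \<Longrightarrow> 0 < a \<Longrightarrow> a < 1 \<Longrightarrow>
    P (mix a f (cst c)) (mix a g (cst c)) \<longleftrightarrow> P f g"
  using A3 unfolding A3_def by simp

lemma cst_mix_cst_iff:
  assumes "u \<in> X" "v \<in> X" "c \<in> X" "0 < a" "a < 1"
  shows "P (cst (a *\<^sub>R u + (1 - a) *\<^sub>R c)) (cst (a *\<^sub>R v + (1 - a) *\<^sub>R c)) \<longleftrightarrow> P (cst u) (cst v)"
  using mix_cst_iff[OF cst_acts cst_acts, OF assms] by (simp add: mix_cst)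

lemma above_of_pointwise_above:
  "f \<in> acts Sig X \<Longrightarrow> g \<in> acts Sig X \<Longrightarrow> (\<forall>s. P (cst (f s)) (cst (g s))) \<Longrightarrow> P f g"
  using A5 unfolding A5_def by blast

text \<open>Negative transitivity through the middle term a v + (1 - a) c, which is not above
  a u + (1 - a) c but strictly above a v + (1 - a) w.\<close>

lemma cst_mix_strict_of_weak:
  assumes "u \<in> X" "v \<in> X" "c \<in> X" "w \<in> X" "0 < a" "a < 1"
    and "\<not> P (cst v) (cst u)" "P (cst c) (cst w)"
  shows "P (cst (a *\<^sub>R u + (1 - a) *\<^sub>R c)) (cst (a *\<^sub>R v + (1 - a) *\<^sub>R w))"
proof -
  have "\<not> P (cst (a *\<^sub>R v + (1 - a) *\<^sub>R c)) (cst (a *\<^sub>R u + (1 - a) *\<^sub>R c))"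
    using cst_mix_cst_iff[OF assms(2,1,3,5,6)] assms(7) by simp
  moreover have "P (cst ((1 - a) *\<^sub>R c + (1 - (1 - a)) *\<^sub>R v))
      (cst ((1 - a) *\<^sub>R w + (1 - (1 - a)) *\<^sub>R v))"
    using cst_mix_cst_iff[OF assms(3,4,2), where a = "1 - a"] assms(5,6,8) by simp
  then have "P (cst (a *\<^sub>R v + (1 - a) *\<^sub>R c)) (cst (a *\<^sub>R v + (1 - a) *\<^sub>R w))"
    by (simp add: add.commute)
  ultimately show ?thesis
    using cst_negative_trans mix_in_X assms(1-6) by (meson less_eq_real_def)
qed

lemma dominating_act_above_cst:
  assumes f: "f \<in> acts Sig X" and g: "g \<in> acts Sig X" and dom: "\<forall>s. weakpref P (f s) (g s)"
    and c: "c \<in> X" and w: "w \<in> X" and "P g (cst c)" "P (cst c) (cst w)"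
  shows "P f (cst c)"
proof -
  let ?U = "{a\<in>{0..1}. P (mix a g (cst w)) (cst c)}"
  have "openin (top_of_set {0..1}) ?U"
    by (rule openin_mix_above[OF g cst_acts[OF w] cst_acts[OF c]])
  moreover have "1 \<in> ?U"
    using assms(6) by (simp add: mix_one)
  ultimately have "\<exists>a\<in>?U. 0 < a \<and> a < 1"
    by (rule openin_unit_interval_meets_interior)
  then obtain a where a: "0 < a" "a < 1" and g_mix: "P (mix a g (cst w)) (cst c)"
    by blast
  have f_mix_acts: "mix a f (cst c) \<in> acts Sig X" and g_mix_acts: "mix a g (cst w) \<in> acts Sig X"
    using mix_cst_acts f g c w a by auto
  have "P (mix a f (cst c)) (mix a g (cst w))"
  proof (rule above_of_pointwise_above[OF f_mix_acts g_mix_acts], rule allI)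
    fix s
    have "f s \<in> X" "g s \<in> X" "\<not> P (cst (g s)) (cst (f s))"
      using f g dom by (auto simp: acts_def weakpref_def)
    then show "P (cst (mix a f (cst c) s)) (cst (mix a g (cst w) s))"
      using cst_mix_strict_of_weak c w assms(7) a by (simp add: mix_def cst_def)
  qed
  then have "P (mix a f (cst c)) (cst c)"
    using strict_trans[OF f_mix_acts g_mix_acts cst_acts[OF c]] g_mix by blast
  then have "P (mix a f (cst c)) (mix a (cst c) (cst c))"
    by (simp only: mix_same)
  then show ?thesis
    using mix_cst_iff[OF f cst_acts[OF c] c a] by blast
qed

lemma cst_between:
  assumes g: "g \<in> acts Sig X" and x: "x \<in> X" and y: "y \<in> X"
    and "P g (cst x)" "P (cst y) (cst x)"
  obtains c where "c \<in> X" "P g (cst c)" "P (cst c) (cst x)"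
proof -
  let ?U = "{a\<in>{0..1}. P g (mix a (cst y) (cst x))}"
  have "openin (top_of_set {0..1}) ?U"
    by (rule openin_mix_below[OF cst_acts[OF y] cst_acts[OF x] g])
  moreover have "0 \<in> ?U"
    using assms(4) by (simp add: mix_zero)
  ultimately have "\<exists>a\<in>?U. 0 < a \<and> a < 1"
    by (rule openin_unit_interval_meets_interior)
  then obtain a where a: "0 < a" "a < 1" and g_mix: "P g (mix a (cst y) (cst x))"
    by blast
  define c where "c = a *\<^sub>R y + (1 - a) *\<^sub>R x"
  have "P (cst c) (cst (a *\<^sub>R x + (1 - a) *\<^sub>R x))"
    using cst_mix_cst_iff[OF y x x a] assms(5) unfolding c_def by blast
  moreover have "a *\<^sub>R x + (1 - a) *\<^sub>R x = x"
    by (simp add: algebra_simps)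
  moreover have "c \<in> X"
    using mix_in_X[OF y x] a unfolding c_def by simp
  moreover have "P g (cst c)"
    using g_mix by (simp add: mix_cst c_def)
  ultimately show ?thesis
    using that by simp
qed

lemma dominated_act_not_above_incomp:
  assumes f: "f \<in> acts Sig X" and g: "g \<in> acts Sig X" and dom: "\<forall>s. weakpref P (f s) (g s)"
    and x: "x \<in> X" and "incomp P (cst x) f"
  shows "\<not> P g (cst x)"
proof
  assume gx: "P g (cst x)"
  from cst_above_or_below[OF x] have "P f (cst x)"
  proof
    assume "\<exists>w\<in>X. P (cst x) (cst w)"
    then show ?thesis
      using dominating_act_above_cst[OF f g dom x _ gx] by blast
  next
    assume "\<exists>y\<in>X. P (cst y) (cst x)"
    then obtain y where "y \<in> X" "P (cst y) (cst x)"
      by blast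
    then obtain c where c: "c \<in> X" "P g (cst c)" "P (cst c) (cst x)"
      using cst_between[OF g x _ gx] by blast
    have "P f (cst c)"
      using dominating_act_above_cst[OF f g dom c(1) x c(2,3)] .
    then show ?thesis
      using strict_trans[OF f cst_acts[OF c(1)] cst_acts[OF x]] c(3) by blast
  qed
  then show False
    using assms(5) by (simp add: incomp_def)
qed

end

theorem lemma4:
  fixes Sig :: "'s set set" and X :: "'x::real_vector set"
    and P :: "('s \<Rightarrow> 'x) \<Rightarrow> ('s \<Rightarrow> 'x) \<Rightarrow> bool"
    and f g :: "'s \<Rightarrow> 'x" and x :: 'x
  assumes "algebra UNIV Sig"
    and "convex X" and "\<exists>a\<in>X. \<exists>b\<in>X. a \<noteq> b"
    and "A1 Sig X P" and "A2 Sig X P" and "A3 Sig X P" and "A4 Sig X P"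
    and "A5 Sig X P" and "A6 Sig X P" and "A7 Sig X P"
    and "f \<in> acts Sig X" and "g \<in> acts Sig X"
    and "\<forall>s. weakpref P (f s) (g s)"
    and "x \<in> X"
  shows "(incomp P (cst x) f \<longrightarrow> \<not> P g (cst x)) \<and>
         (incomp P (cst x) g \<longrightarrow> \<not> P (cst x) f)"
proof -
  interpret mixture_preference Sig X P
    using assms by (simp add: mixture_preference_def)
  have "\<forall>s. weakpref P\<inverse>\<inverse> (g s) (f s)"
    using assms(13) by (simp add: weakpref_def)
  moreover have "incomp P\<inverse>\<inverse> = incomp P"
    by (auto simp: incomp_def fun_eq_iff)
  ultimately show ?thesis
    using dominated_act_not_above_incomp
      mixture_preference.dominated_act_not_above_incomp[OF converse_mixture_preference, of g f]
      assms(11-14) by simp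
qed

end
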